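(* Let $T$ be a ranked monad. Every open $w\in\mathcal{O}(\mathrm{LB}_1T)$ can be written as $w=\bigvee_{m\in T1}\hat m\wedge\mathrm{const}_{w(m)}$, where $\hat m:=\lambda n.[\![m\sim n]\!]$; consequently the frame $\mathcal{O}(\mathrm{LB}_1T)$ is generated by the opens $[m\,|\,b]:=\lambda n.[\![m\sim n]\!]\wedge[b]$ for $m\in T1$ and $b\in T2$.
   Context: Monads on $\mathbf{Set}$: sets $TA$, $\mathrm{return}$, $\mathbin{\gg\!=}\colon TA\times(TB)^A\to TB$ with monad laws; $t\gg s:=t\mathbin{\gg\!=}\lambda a.s$; ranked of rank $\kappa$: every $t\in TA$ is $t'\mathbin{\gg\!=}\lambda i.\mathrm{return}\,f(i)$ with $t'\in TI$, $|I|<\kappa$. $1=\{*\}$, $2=\{0,1\}$. $\mathrm{LB}_0T$: the locale whose frame is presented by generators $[b]$ ($b\in T2$) with relations $[t\mapsto a]\wedge[t\mapsto a']=\bot$ ($a\ne a'$), $[t\gg\mathrm{return}\,a\mapsto a]=\top$, $[t\mathbin{\gg\!=}u\mapsto b]=\bigvee_a[t\mapsto a]\wedge[t\gg u(a)\mapsto b]$, $[t\mapsto a]:=[t\mathbin{\gg\!=}\lambda a'.\mathrm{return}(\delta_a(a'))]$, $\delta_a(a')=1$ iff $a'=a$. Trace equivalence: $[\![m\sim_1m']\!]=\bigvee\{[t\mapsto a]:|A|\le\kappa,t\in TA,u,u'\colon A\to T1,u(a)=u'(a),m=t\mathbin{\gg\!=}u,m'=t\mathbin{\gg\!=}u'\}$;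 for $k\ge2$, $[\![m_1\sim_km_k]\!]=\bigvee\{\bigwedge_{i=1}^{k-1}[\![m_i\sim_1m_{i+1}]\!]:m_2,\dots,m_{k-1}\in T1\}$; $[\![m\sim m']\!]=\bigvee_{k\ge1}[\![m\sim_km']\!]$; $m\sim_bm'$ iff $b\le[\![m\sim m']\!]$ ($b$ complemented). The locale of transitions $\mathrm{LB}_1T$ has frame the set of functions $w\colon T1\to\mathcal{O}(\mathrm{LB}_0T)$ with $b\wedge w(m_1)=b\wedge w(m_2)$ whenever $b$ complemented and $m_1\sim_bm_2$, ordered pointwise (with pointwise meets); $\mathrm{const}_u$ is the constant function with value $u$. *)

theory Defs
  imports Main "HOL-Library.FuncSet"
begin

text \<open>A monad on Set is encoded by: a family of sets T A (for A a subset of the universe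
type 'u; elements of all T A live in the carrier type 't), unit maps ret A : A -> T A and
Kleisli extensions bind A B : T A x (T B)^A -> T B, indexed by the source and target set.\<close>

record ('u, 't) smonad =
  Tm  :: "'u set \<Rightarrow> 't set"
  ret :: "'u set \<Rightarrow> 'u \<Rightarrow> 't"
  bnd :: "'u set \<Rightarrow> 'u set \<Rightarrow> 't \<Rightarrow> ('u \<Rightarrow> 't) \<Rightarrow> 't"

definition is_monad :: "('u, 't) smonad \<Rightarrow> bool" where
  "is_monad M \<longleftrightarrow>
     (\<forall>A a. a \<in> A \<longrightarrow> ret M A a \<in> Tm M A) \<and>
     (\<forall>A B t f. t \<in> Tm M A \<longrightarrow> f \<in> A \<rightarrow> Tm M B \<longrightarrow> bnd M A B t f \<in> Tm M B) \<and>
     (\<forall>A B t f g. t \<in> Tm M A \<longrightarrow> f \<in> A \<rightarrow> Tm M B \<longrightarrow> (\<forall>a\<in>A. f a = g a)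
         \<longrightarrow> bnd M A B t f = bnd M A B t g) \<and>
     (\<forall>A B a f. a \<in> A \<longrightarrow> f \<in> A \<rightarrow> Tm M B \<longrightarrow> bnd M A B (ret M A a) f = f a) \<and>
     (\<forall>A t. t \<in> Tm M A \<longrightarrow> bnd M A A t (ret M A) = t) \<and>
     (\<forall>A B C t f g. t \<in> Tm M A \<longrightarrow> f \<in> A \<rightarrow> Tm M B \<longrightarrow> g \<in> B \<rightarrow> Tm M C \<longrightarrow>
         bnd M B C (bnd M A B t f) g = bnd M A C t (\<lambda>a. bnd M B C (f a) g))"

definition ranked :: "('u, 't) smonad \<Rightarrow> 'k rel \<Rightarrow> bool" where
  "ranked M \<kappa> \<longleftrightarrow> Card_order \<kappa> \<and>
     (\<forall>A t. t \<in> Tm M A \<longrightarrow> (\<exists>I t' f. (card_of I, \<kappa>) \<in> ordLess \<and> t' \<in> Tm M I \<and>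
         f \<in> I \<rightarrow> A \<and> t = bnd M I A t' (\<lambda>i. ret M A (f i))))"

definition seq :: "('u, 't) smonad \<Rightarrow> 'u set \<Rightarrow> 'u set \<Rightarrow> 't \<Rightarrow> 't \<Rightarrow> 't" where
  "seq M A B t s = bnd M A B t (\<lambda>_. s)"

text \<open>The sets 1 = {s} and 2 = {z0, z1} (with z0 \<noteq> z1) inside the universe.\<close>

definition pt :: "('u, 't) smonad \<Rightarrow> 'u \<Rightarrow> 'u \<Rightarrow> 'u set \<Rightarrow> 't \<Rightarrow> 'u \<Rightarrow> 't" where
  "pt M z0 z1 A t a = bnd M A {z0, z1} t (\<lambda>a'. ret M {z0, z1} (if a' = a then z1 else z0))"

text \<open>Elements of the free meet-semilattice on generators T2: finite subsets of T2
(a finite set stands for the meet of its generators).\<close>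
definition Fin :: "('u, 't) smonad \<Rightarrow> 'u \<Rightarrow> 'u \<Rightarrow> 't set set" where
  "Fin M z0 z1 = {S. finite S \<and> S \<subseteq> Tm M {z0, z1}}"

text \<open>Relations, written as inequalities  meet(a) <= join over Bs of meet(B).
An equation l = r is recorded as the two inequalities. The four parts are:
[t |-> a] /\ [t |-> a'] = bot (a \<noteq> a');  top <= [t >> return a |-> a];
[t >>= u |-> b] <= join_a [t |-> a] /\ [t >> u(a) |-> b];  and the converse inequalities.\<close>
definition rels :: "('u, 't) smonad \<Rightarrow> 'u \<Rightarrow> 'u \<Rightarrow> ('t set \<times> 't set set) set" where
  "rels M z0 z1 =
          {({pt M z0 z1 A t a, pt M z0 z1 A t a'}, {}) | A t a a'.
         t \<in> Tm M A \<and> a \<in> A \<and> a' \<in> A \<and> a \<noteq> a'}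
   \<union>      {({}, {{pt M z0 z1 A (seq M B A t (ret M A a)) a}}) | A B t a.
         t \<in> Tm M B \<and> a \<in> A}
   \<union>      {({pt M z0 z1 B (bnd M A B t u) b},
        {{pt M z0 z1 A t a, pt M z0 z1 B (seq M A B t (u a)) b} | a. a \<in> A}) | A B t u b.
         t \<in> Tm M A \<and> u \<in> A \<rightarrow> Tm M B \<and> b \<in> B}
   \<union>      {({pt M z0 z1 A t a, pt M z0 z1 B (seq M A B t (u a)) b},
        {{pt M z0 z1 B (bnd M A B t u) b}}) | A B t u a b.
         t \<in> Tm M A \<and> u \<in> A \<rightarrow> Tm M B \<and> a \<in> A \<and> b \<in> B}"

text \<open>The presented frame: down-sets of the free meet-semilattice (in the order where larger
finite sets are smaller meets) which are saturated for the (meet-stabilised) relations.\<close>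
definition O0 :: "('u, 't) smonad \<Rightarrow> 'u \<Rightarrow> 'u \<Rightarrow> 't set set set" where
  "O0 M z0 z1 = {U. U \<subseteq> Fin M z0 z1 \<and>
      (\<forall>S S'. S \<in> U \<longrightarrow> S' \<in> Fin M z0 z1 \<longrightarrow> S \<subseteq> S' \<longrightarrow> S' \<in> U) \<and>
      (\<forall>(a, Bs) \<in> rels M z0 z1. \<forall>c \<in> Fin M z0 z1. (\<forall>B \<in> Bs. c \<union> B \<in> U) \<longrightarrow> c \<union> a \<in> U)}"

definition top0 :: "('u, 't) smonad \<Rightarrow> 'u \<Rightarrow> 'u \<Rightarrow> 't set set" where
  "top0 M z0 z1 = Fin M z0 z1"

text \<open>Join in O0 (least saturated down-set containing the union); meets are intersections.\<close>
definition Join0 :: "('u, 't) smonad \<Rightarrow> 'u \<Rightarrow> 'u \<Rightarrow> 't set set set \<Rightarrow> 't set set" where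
  "Join0 M z0 z1 Us = \<Inter>{V \<in> O0 M z0 z1. \<Union>Us \<subseteq> V}"

definition bot0 :: "('u, 't) smonad \<Rightarrow> 'u \<Rightarrow> 'u \<Rightarrow> 't set set" where
  "bot0 M z0 z1 = Join0 M z0 z1 {}"

definition gen :: "('u, 't) smonad \<Rightarrow> 'u \<Rightarrow> 'u \<Rightarrow> 't \<Rightarrow> 't set set" where
  "gen M z0 z1 b = Join0 M z0 z1 {{S \<in> Fin M z0 z1. b \<in> S}}"

definition complemented :: "('u, 't) smonad \<Rightarrow> 'u \<Rightarrow> 'u \<Rightarrow> 't set set \<Rightarrow> bool" where
  "complemented M z0 z1 U \<longleftrightarrow> U \<in> O0 M z0 z1 \<and>
     (\<exists>V \<in> O0 M z0 z1. U \<inter> V = bot0 M z0 z1 \<and> Join0 M z0 z1 {U, V} = top0 M z0 z1)"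

definition sim1 :: "('u, 't) smonad \<Rightarrow> 'k rel \<Rightarrow> 'u \<Rightarrow> 'u \<Rightarrow> 'u \<Rightarrow> 't \<Rightarrow> 't \<Rightarrow> 't set set" where
  "sim1 M \<kappa> s z0 z1 m m' = Join0 M z0 z1
     {gen M z0 z1 (pt M z0 z1 A t a) | A t u u' a.
        (card_of A, \<kappa>) \<in> ordLeq \<and> t \<in> Tm M A \<and> u \<in> A \<rightarrow> Tm M {s} \<and> u' \<in> A \<rightarrow> Tm M {s} \<and>
        a \<in> A \<and> u a = u' a \<and> m = bnd M A {s} t u \<and> m' = bnd M A {s} t u'}"

fun chain_meet :: "('u, 't) smonad \<Rightarrow> 'k rel \<Rightarrow> 'u \<Rightarrow> 'u \<Rightarrow> 'u \<Rightarrow> 't \<Rightarrow> 't list \<Rightarrow> 't \<Rightarrow> 't set set" where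
  "chain_meet M \<kappa> s z0 z1 m [] n = sim1 M \<kappa> s z0 z1 m n"
| "chain_meet M \<kappa> s z0 z1 m (x # xs) n = sim1 M \<kappa> s z0 z1 m x \<inter> chain_meet M \<kappa> s z0 z1 x xs n"

text \<open>[m ~ n] = join over k >= 1 of [m ~_k n]; the chain m = m_1, ..., m_k = n has
intermediate elements ms (length k - 2 for k >= 2; k = 1 and k = 2 both give [m ~_1 n]).\<close>
definition sim :: "('u, 't) smonad \<Rightarrow> 'k rel \<Rightarrow> 'u \<Rightarrow> 'u \<Rightarrow> 'u \<Rightarrow> 't \<Rightarrow> 't \<Rightarrow> 't set set" where
  "sim M \<kappa> s z0 z1 m n = Join0 M z0 z1
     {chain_meet M \<kappa> s z0 z1 m ms n | ms. set ms \<subseteq> Tm M {s}}"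

definition O1 :: "('u, 't) smonad \<Rightarrow> 'k rel \<Rightarrow> 'u \<Rightarrow> 'u \<Rightarrow> 'u \<Rightarrow> ('t \<Rightarrow> 't set set) set" where
  "O1 M \<kappa> s z0 z1 = {w \<in> Tm M {s} \<rightarrow>\<^sub>E O0 M z0 z1.
     \<forall>b m1 m2. complemented M z0 z1 b \<longrightarrow> m1 \<in> Tm M {s} \<longrightarrow> m2 \<in> Tm M {s} \<longrightarrow>
        b \<subseteq> sim M \<kappa> s z0 z1 m1 m2 \<longrightarrow> b \<inter> w m1 = b \<inter> w m2}"

definition le1 :: "('u, 't) smonad \<Rightarrow> 'u \<Rightarrow> ('t \<Rightarrow> 't set set) \<Rightarrow> ('t \<Rightarrow> 't set set) \<Rightarrow> bool" where
  "le1 M s v w \<longleftrightarrow> (\<forall>n \<in> Tm M {s}. v n \<subseteq> w n)"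

definition is_lub1 :: "('u, 't) smonad \<Rightarrow> 'k rel \<Rightarrow> 'u \<Rightarrow> 'u \<Rightarrow> 'u \<Rightarrow>
    ('t \<Rightarrow> 't set set) set \<Rightarrow> ('t \<Rightarrow> 't set set) \<Rightarrow> bool" where
  "is_lub1 M \<kappa> s z0 z1 W w \<longleftrightarrow> w \<in> O1 M \<kappa> s z0 z1 \<and> (\<forall>v \<in> W. le1 M s v w) \<and>
     (\<forall>w' \<in> O1 M \<kappa> s z0 z1. (\<forall>v \<in> W. le1 M s v w') \<longrightarrow> le1 M s w w')"

definition meet1 :: "('u, 't) smonad \<Rightarrow> 'u \<Rightarrow> ('t \<Rightarrow> 't set set) \<Rightarrow> ('t \<Rightarrow> 't set set) \<Rightarrow> ('t \<Rightarrow> 't set set)" where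
  "meet1 M s v w = (\<lambda>n \<in> Tm M {s}. v n \<inter> w n)"

definition top1 :: "('u, 't) smonad \<Rightarrow> 'u \<Rightarrow> 'u \<Rightarrow> 'u \<Rightarrow> ('t \<Rightarrow> 't set set)" where
  "top1 M s z0 z1 = (\<lambda>n \<in> Tm M {s}. top0 M z0 z1)"

definition hat :: "('u, 't) smonad \<Rightarrow> 'k rel \<Rightarrow> 'u \<Rightarrow> 'u \<Rightarrow> 'u \<Rightarrow> 't \<Rightarrow> ('t \<Rightarrow> 't set set)" where
  "hat M \<kappa> s z0 z1 m = (\<lambda>n \<in> Tm M {s}. sim M \<kappa> s z0 z1 m n)"

definition const1 :: "('u, 't) smonad \<Rightarrow> 'u \<Rightarrow> 't set set \<Rightarrow> ('t \<Rightarrow> 't set set)" where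
  "const1 M s u = (\<lambda>n \<in> Tm M {s}. u)"

definition basic1 :: "('u, 't) smonad \<Rightarrow> 'k rel \<Rightarrow> 'u \<Rightarrow> 'u \<Rightarrow> 'u \<Rightarrow> 't \<Rightarrow> 't \<Rightarrow> ('t \<Rightarrow> 't set set)" where
  "basic1 M \<kappa> s z0 z1 m b = (\<lambda>n \<in> Tm M {s}. sim M \<kappa> s z0 z1 m n \<inter> gen M z0 z1 b)"

definition generated1 :: "('u, 't) smonad \<Rightarrow> 'k rel \<Rightarrow> 'u \<Rightarrow> 'u \<Rightarrow> 'u \<Rightarrow>
    ('t \<Rightarrow> 't set set) set \<Rightarrow> ('t \<Rightarrow> 't set set) set" where
  "generated1 M \<kappa> s z0 z1 G = \<Inter>{S. S \<subseteq> O1 M \<kappa> s z0 z1 \<and> G \<subseteq> S \<and> top1 M s z0 z1 \<in> S \<and>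
      (\<forall>v \<in> S. \<forall>w \<in> S. meet1 M s v w \<in> S) \<and>
      (\<forall>W w. W \<subseteq> S \<longrightarrow> is_lub1 M \<kappa> s z0 z1 W w \<longrightarrow> w \<in> S)}"

end

(*
  Every open w of LB_1 T satisfies w m \<and> [m \<sim> n] \<le> w n. For [m \<sim>\<^sub>1 n] this holds because it
  is a join of opens [t \<mapsto> a], each of which is complemented (the relations make the
  [t \<mapsto> a], a \<in> A, a partition of \<top>), so the defining condition of O(LB_1 T) applies to it;
  frame distributivity passes the inequality to the join, and induction along chains extends it
  to [m \<sim> n]. Together with [m \<sim> m] = \<top> (witnessed by [m \<mapsto> *] = \<top>, which needs \<kappa> \<ge> 1)
  this gives w = \<Or>m. hat m \<and> const (w m).

  Symmetry and transitivity of [\<sim>] make every hat m \<and> const u an open of LB_1 T, and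
  u \<mapsto> hat m \<and> const u preserves joins and binary meets. Since u is the join of the finite
  meets of generators [b] below it, hat m \<and> const u, and hence w, lies in the subframe generated
  by the [m | b] = hat m \<and> const [b].
*)

theory Submission
  imports Defs
begin

locale monad_frame =
  fixes M :: "('u, 't) smonad" and z0 z1 :: 'u
  assumes monad: "is_monad M"
begin

abbreviation "fins \<equiv> Fin M z0 z1"
abbreviation "opens \<equiv> O0 M z0 z1"
abbreviation "join \<equiv> Join0 M z0 z1"
abbreviation "T2 \<equiv> Tm M {z0, z1}"
abbreviation "mapsto \<equiv> pt M z0 z1"
abbreviation "generator \<equiv> gen M z0 z1"

lemma ret_in_Tm: "a \<in> A \<Longrightarrow> ret M A a \<in> Tm M A"
  using monad unfolding is_monad_def by simp

lemma bnd_in_Tm: "t \<in> Tm M A \<Longrightarrow> f \<in> A \<rightarrow> Tm M B \<Longrightarrow> bnd M A B t f \<in> Tm M B"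
  using monad unfolding is_monad_def by simp

lemma bnd_ret_right: "t \<in> Tm M A \<Longrightarrow> bnd M A A t (ret M A) = t"
  using monad unfolding is_monad_def by simp

lemma seq_in_Tm: "t \<in> Tm M A \<Longrightarrow> x \<in> Tm M B \<Longrightarrow> seq M A B t x \<in> Tm M B"
  unfolding seq_def by (rule bnd_in_Tm) auto

lemma mapsto_in_T2: "t \<in> Tm M A \<Longrightarrow> mapsto A t a \<in> T2"
  unfolding pt_def by (rule bnd_in_Tm) (auto intro: ret_in_Tm)

lemma Fin_Un: "S \<in> fins \<Longrightarrow> S' \<in> fins \<Longrightarrow> S \<union> S' \<in> fins"
  unfolding Fin_def by auto

lemma rels_lhs_in_Fin: "(a, Bs) \<in> rels M z0 z1 \<Longrightarrow> a \<in> fins"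
  unfolding rels_def Fin_def
  by (fastforce intro: mapsto_in_T2 bnd_in_Tm seq_in_Tm)

lemma rel_disjoint:
  "t \<in> Tm M A \<Longrightarrow> a \<in> A \<Longrightarrow> a' \<in> A \<Longrightarrow> a \<noteq> a' \<Longrightarrow>
    ({mapsto A t a, mapsto A t a'}, {}) \<in> rels M z0 z1"
  unfolding rels_def by blast

lemma rel_return:
  "t \<in> Tm M B \<Longrightarrow> a \<in> A \<Longrightarrow> ({}, {{mapsto A (seq M B A t (ret M A a)) a}}) \<in> rels M z0 z1"
  unfolding rels_def by blast

lemma rel_bind:
  "t \<in> Tm M A \<Longrightarrow> u \<in> A \<rightarrow> Tm M B \<Longrightarrow> b \<in> B \<Longrightarrow>
    ({mapsto B (bnd M A B t u) b},
     {{mapsto A t a, mapsto B (seq M A B t (u a)) b} | a. a \<in> A}) \<in> rels M z0 z1"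
  unfolding rels_def by blast

definition up_closed :: "'t set set \<Rightarrow> bool" where
  "up_closed X \<longleftrightarrow> X \<subseteq> fins \<and> (\<forall>S \<in> X. \<forall>S' \<in> fins. S \<subseteq> S' \<longrightarrow> S' \<in> X)"

lemma up_closedD: "up_closed X \<Longrightarrow> S \<in> X \<Longrightarrow> S' \<in> fins \<Longrightarrow> S \<subseteq> S' \<Longrightarrow> S' \<in> X"
  unfolding up_closed_def by blast

lemma up_closed_subset_Fin: "up_closed X \<Longrightarrow> X \<subseteq> fins"
  unfolding up_closed_def by blast

lemma O0I:
  assumes "up_closed U"
    and "\<And>a Bs c. (a, Bs) \<in> rels M z0 z1 \<Longrightarrow> c \<in> fins \<Longrightarrow> (\<And>B. B \<in> Bs \<Longrightarrow> c \<union> B \<in> U) \<Longrightarrow>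
      c \<union> a \<in> U"
  shows "U \<in> opens"
  using assms unfolding O0_def up_closed_def by (auto simp: Ball_def)

lemma up_closed_O0: "U \<in> opens \<Longrightarrow> up_closed U"
  unfolding O0_def up_closed_def by simp

lemma O0_subset_Fin: "U \<in> opens \<Longrightarrow> U \<subseteq> fins"
  by (rule up_closed_subset_Fin[OF up_closed_O0])

lemma O0_saturated:
  assumes "U \<in> opens" and "(a, Bs) \<in> rels M z0 z1" and "c \<in> fins"
    and "\<And>B. B \<in> Bs \<Longrightarrow> c \<union> B \<in> U"
  shows "c \<union> a \<in> U"
  using assms unfolding O0_def by fastforce

lemma Fin_in_O0: "fins \<in> opens"
  by (rule O0I) (auto simp: up_closed_def intro: Fin_Un rels_lhs_in_Fin)

lemma Inter_in_O0:
  assumes "Vs \<subseteq> opens" and "Vs \<noteq> {}"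
  shows "\<Inter>Vs \<in> opens"
proof (rule O0I)
  show "up_closed (\<Inter>Vs)"
    using assms up_closed_O0 unfolding up_closed_def by blast
  show "c \<union> a \<in> \<Inter>Vs"
    if "(a, Bs) \<in> rels M z0 z1" and "c \<in> fins" and "\<And>B. B \<in> Bs \<Longrightarrow> c \<union> B \<in> \<Inter>Vs" for a Bs c
    using that assms(1) O0_saturated by blast
qed

lemma Int_in_O0: "U \<in> opens \<Longrightarrow> V \<in> opens \<Longrightarrow> U \<inter> V \<in> opens"
  using Inter_in_O0[of "{U, V}"] by simp

lemma Join0_in_O0: "\<Union>Us \<subseteq> fins \<Longrightarrow> join Us \<in> opens"
  unfolding Join0_def using Fin_in_O0 by (intro Inter_in_O0) auto

lemma Join0_upper: "U \<in> Us \<Longrightarrow> U \<subseteq> join Us"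
  unfolding Join0_def by blast

lemma Join0_least: "V \<in> opens \<Longrightarrow> \<Union>Us \<subseteq> V \<Longrightarrow> join Us \<subseteq> V"
  unfolding Join0_def by blast

lemma up_closed_Join0: "(\<And>U. U \<in> Us \<Longrightarrow> up_closed U) \<Longrightarrow> up_closed (join Us)"
  using up_closed_subset_Fin by (intro up_closed_O0 Join0_in_O0) blast

definition heyting_imp :: "'t set set \<Rightarrow> 't set set \<Rightarrow> 't set set" where
  "heyting_imp U J = {S \<in> fins. \<forall>T \<in> U. S \<union> T \<in> J}"

lemma heyting_imp_in_O0:
  assumes U: "up_closed U" and J: "J \<in> opens"
  shows "heyting_imp U J \<in> opens"
proof (rule O0I)
  show "up_closed (heyting_imp U J)"
    unfolding up_closed_def
  proof (intro conjI ballI impI)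
    fix S S' assume S: "S \<in> heyting_imp U J" and S': "S' \<in> fins" and "S \<subseteq> S'"
    have "S' \<union> T \<in> J" if T: "T \<in> U" for T
    proof (rule up_closedD[OF up_closed_O0[OF J]])
      show "S \<union> T \<in> J" using S T unfolding heyting_imp_def by blast
      show "S' \<union> T \<in> fins" using S' T up_closed_subset_Fin[OF U] Fin_Un by blast
      show "S \<union> T \<subseteq> S' \<union> T" using \<open>S \<subseteq> S'\<close> by blast
    qed
    then show "S' \<in> heyting_imp U J" unfolding heyting_imp_def using S' by blast
  qed (auto simp: heyting_imp_def)
  show "c \<union> a \<in> heyting_imp U J"
    if r: "(a, Bs) \<in> rels M z0 z1" and c: "c \<in> fins"
      and h: "\<And>B. B \<in> Bs \<Longrightarrow> c \<union> B \<in> heyting_imp U J" for a Bs c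
  proof -
    have "(c \<union> T) \<union> a \<in> J" if T: "T \<in> U" for T
    proof (rule O0_saturated[OF J r])
      show "c \<union> T \<in> fins" using c T up_closed_subset_Fin[OF U] Fin_Un by blast
      show "c \<union> T \<union> B \<in> J" if "B \<in> Bs" for B
      proof -
        have "(c \<union> B) \<union> T \<in> J" using h[OF that] T unfolding heyting_imp_def by blast
        then show ?thesis by (simp add: Un_ac)
      qed
    qed
    then show ?thesis
      unfolding heyting_imp_def using Fin_Un[OF c rels_lhs_in_Fin[OF r]] by (simp add: Un_ac)
  qed
qed

lemma Int_heyting_imp_subset: "U \<inter> heyting_imp U J \<subseteq> J"
  unfolding heyting_imp_def by fastforce

lemma Int_Join0_subset:
  assumes U: "up_closed U" and Vs: "\<And>V. V \<in> Vs \<Longrightarrow> up_closed V" and J: "J \<in> opens"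
    and sub: "\<And>V. V \<in> Vs \<Longrightarrow> U \<inter> V \<subseteq> J"
  shows "U \<inter> join Vs \<subseteq> J"
proof -
  have "\<Union>Vs \<subseteq> heyting_imp U J"
  proof
    fix S assume "S \<in> \<Union>Vs"
    then obtain V where V: "V \<in> Vs" and S: "S \<in> V" by blast
    have SF: "S \<in> fins" using up_closed_subset_Fin[OF Vs[OF V]] S by blast
    have "S \<union> T \<in> U \<inter> V" if T: "T \<in> U" for T
      using up_closedD[OF U T] up_closedD[OF Vs[OF V] S] Fin_Un[OF SF] T up_closed_subset_Fin[OF U]
      by blast
    then show "S \<in> heyting_imp U J" unfolding heyting_imp_def using SF sub[OF V] by blast
  qed
  then have "join Vs \<subseteq> heyting_imp U J" by (rule Join0_least[OF heyting_imp_in_O0[OF U J]])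
  then show ?thesis using Int_heyting_imp_subset by blast
qed

lemma Join0_Int_Join0_subset:
  assumes "\<And>U. U \<in> Us \<Longrightarrow> up_closed U" and "\<And>V. V \<in> Vs \<Longrightarrow> up_closed V" and "J \<in> opens"
    and "\<And>U V. U \<in> Us \<Longrightarrow> V \<in> Vs \<Longrightarrow> U \<inter> V \<subseteq> J"
  shows "join Us \<inter> join Vs \<subseteq> J"
proof -
  have "U \<inter> join Vs \<subseteq> J" if "U \<in> Us" for U
    using Int_Join0_subset[OF assms(1)[OF that] assms(2) assms(3)] assms(4)[OF that] by blast
  then have "join Vs \<inter> join Us \<subseteq> J"
    using Int_Join0_subset[OF up_closed_Join0[OF assms(2)] assms(1) assms(3)] by blast
  then show ?thesis by blast
qed

definition principal :: "'t set \<Rightarrow> 't set set" where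
  "principal S = {S' \<in> fins. S \<subseteq> S'}"

text \<open>The open \<open>\<And>b\<in>S. [b]\<close>.\<close>
definition meet_gens :: "'t set \<Rightarrow> 't set set" where
  "meet_gens S = join {principal S}"

lemma up_closed_principal: "up_closed (principal S)"
  unfolding up_closed_def principal_def by blast

lemma principal_subset_meet_gens: "principal S \<subseteq> meet_gens S"
  unfolding meet_gens_def by (rule Join0_upper) simp

lemma meet_gens_in_O0: "meet_gens S \<in> opens"
  unfolding meet_gens_def principal_def by (rule Join0_in_O0) blast

lemma gen_eq_meet_gens: "generator b = meet_gens {b}"
  unfolding gen_def meet_gens_def principal_def by simp

lemma gen_in_O0: "generator b \<in> opens"
  unfolding gen_eq_meet_gens by (rule meet_gens_in_O0)

lemma meet_gens_empty: "meet_gens {} = fins"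
proof
  show "meet_gens {} \<subseteq> fins"
    using O0_subset_Fin[OF meet_gens_in_O0] .
  show "fins \<subseteq> meet_gens {}"
    using principal_subset_meet_gens[of "{}"] unfolding principal_def by blast
qed

lemma meet_gens_insert: "meet_gens (insert b S) = generator b \<inter> meet_gens S"
proof
  have "principal (insert b S) \<subseteq> generator b \<inter> meet_gens S"
    using principal_subset_meet_gens[of "{b}"] principal_subset_meet_gens[of S]
    unfolding gen_eq_meet_gens principal_def by blast
  then show "meet_gens (insert b S) \<subseteq> generator b \<inter> meet_gens S"
    unfolding meet_gens_def[of "insert b S"]
    by (intro Join0_least Int_in_O0 gen_in_O0 meet_gens_in_O0) simp
  have "principal {b} \<inter> principal S \<subseteq> meet_gens (insert b S)"
    using principal_subset_meet_gens[of "insert b S"] unfolding principal_def by blast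
  then show "generator b \<inter> meet_gens S \<subseteq> meet_gens (insert b S)"
    unfolding gen_eq_meet_gens meet_gens_def[of "{b}"] meet_gens_def[of S]
    using up_closed_principal meet_gens_in_O0 by (intro Join0_Int_Join0_subset) auto
qed

lemma O0_eq_Join0_meet_gens:
  assumes U: "U \<in> opens"
  shows "U = join {meet_gens S | S. S \<in> U}"
proof
  show "U \<subseteq> join {meet_gens S | S. S \<in> U}"
  proof
    fix S assume S: "S \<in> U"
    then have "S \<in> principal S"
      using O0_subset_Fin[OF U] unfolding principal_def by blast
    moreover have "meet_gens S \<subseteq> join {meet_gens S | S. S \<in> U}"
      using S by (intro Join0_upper) blast
    ultimately show "S \<in> join {meet_gens S | S. S \<in> U}"
      using principal_subset_meet_gens by blast
  qed
  have "meet_gens S \<subseteq> U" if "S \<in> U" for S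
    unfolding meet_gens_def
    using up_closedD[OF up_closed_O0[OF U] that] unfolding principal_def
    by (intro Join0_least[OF U]) blast
  then show "join {meet_gens S | S. S \<in> U} \<subseteq> U"
    by (intro Join0_least[OF U]) blast
qed

lemma bot0_in_O0: "bot0 M z0 z1 \<in> opens"
  unfolding bot0_def by (rule Join0_in_O0) simp

lemma bot0_least: "V \<in> opens \<Longrightarrow> bot0 M z0 z1 \<subseteq> V"
  unfolding bot0_def by (rule Join0_least) auto

lemma mem_bot0I: "S \<in> fins \<Longrightarrow> (\<And>V. V \<in> opens \<Longrightarrow> S \<in> V) \<Longrightarrow> S \<in> bot0 M z0 z1"
  unfolding bot0_def Join0_def by blast

lemma Fin_subset_if_covers_mapsto:
  assumes J: "J \<in> opens" and t: "t \<in> Tm M A" and a0: "a0 \<in> A"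
    and cover: "\<And>a. a \<in> A \<Longrightarrow> principal {mapsto A t a} \<subseteq> J"
  shows "fins \<subseteq> J"
proof
  fix S assume S: "S \<in> fins"
  \<comment> \<open>\<open>\<top> = [t \<then> return a0 \<mapsto> a0] \<le> \<Or>a. [t \<mapsto> a] \<and> \<dots>\<close>\<close>
  define X where "X = mapsto A (seq M A A t (ret M A a0)) a0"
  have X: "X \<in> T2" unfolding X_def using mapsto_in_T2 seq_in_Tm ret_in_Tm t a0 by blast
  have bind: "({X}, {{mapsto A t a, X} | a. a \<in> A}) \<in> rels M z0 z1"
    using rel_bind[OF t, of "\<lambda>_. ret M A a0" A a0] ret_in_Tm[OF a0] a0
    unfolding X_def seq_def by simp
  have "S \<union> {X} \<in> J"
  proof (rule O0_saturated[OF J bind S])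
    fix B assume "B \<in> {{mapsto A t a, X} | a. a \<in> A}"
    then obtain a where a: "a \<in> A" and B: "B = {mapsto A t a, X}" by blast
    have "S \<union> B \<in> principal {mapsto A t a}"
      using S B X mapsto_in_T2[OF t] unfolding principal_def Fin_def by auto
    then show "S \<union> B \<in> J" using cover[OF a] by blast
  qed
  then show "S \<in> J"
    using O0_saturated[OF J rel_return[OF t a0] S] unfolding X_def by simp
qed

lemma gen_mapsto_singleton:
  assumes "t \<in> Tm M {a}"
  shows "generator (mapsto {a} t a) = fins"
proof
  show "generator (mapsto {a} t a) \<subseteq> fins"
    using O0_subset_Fin[OF gen_in_O0] .
  show "fins \<subseteq> generator (mapsto {a} t a)"
  proof (rule Fin_subset_if_covers_mapsto[OF gen_in_O0 assms])
    show "principal {mapsto {a} t a'} \<subseteq> generator (mapsto {a} t a)" if "a' \<in> {a}" for a'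
      using that principal_subset_meet_gens unfolding gen_eq_meet_gens by simp
  qed simp
qed

lemma gen_mapsto_disjoint:
  assumes t: "t \<in> Tm M A" and a: "a \<in> A" "a' \<in> A" "a \<noteq> a'"
  shows "generator (mapsto A t a) \<inter> generator (mapsto A t a') \<subseteq> bot0 M z0 z1"
proof -
  have "principal {mapsto A t a} \<inter> principal {mapsto A t a'} \<subseteq> bot0 M z0 z1"
  proof
    fix S assume S: "S \<in> principal {mapsto A t a} \<inter> principal {mapsto A t a'}"
    then have SF: "S \<in> fins" and "S \<union> {mapsto A t a, mapsto A t a'} = S"
      unfolding principal_def by auto
    then show "S \<in> bot0 M z0 z1"
      using O0_saturated[OF _ rel_disjoint[OF t a] SF] by (intro mem_bot0I) auto
  qed
  then show ?thesis
    unfolding gen_eq_meet_gens meet_gens_def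
    by (intro Join0_Int_Join0_subset bot0_in_O0) (auto intro: up_closed_principal)
qed

lemma complemented_gen_mapsto:
  assumes t: "t \<in> Tm M A" and a: "a \<in> A"
  shows "complemented M z0 z1 (generator (mapsto A t a))"
proof -
  let ?g = "\<lambda>a. generator (mapsto A t a)"
  define V where "V = join {?g a' | a'. a' \<in> A \<and> a' \<noteq> a}"
  have V: "V \<in> opens"
    unfolding V_def using O0_subset_Fin[OF gen_in_O0]
    by (intro Join0_in_O0) blast
  have "?g a \<inter> V \<subseteq> bot0 M z0 z1"
    unfolding V_def using gen_mapsto_disjoint[OF t a]
    by (intro Int_Join0_subset up_closed_O0 gen_in_O0 bot0_in_O0)
      (auto intro!: up_closed_O0 gen_in_O0)
  then have disjoint: "?g a \<inter> V = bot0 M z0 z1"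
    using bot0_least[OF Int_in_O0[OF gen_in_O0 V]] by blast
  have JO: "join {?g a, V} \<in> opens"
    using O0_subset_Fin[OF gen_in_O0] O0_subset_Fin[OF V]
    by (intro Join0_in_O0) blast
  have "fins \<subseteq> join {?g a, V}"
  proof (rule Fin_subset_if_covers_mapsto[OF JO t a])
    fix a' assume "a' \<in> A"
    then have "?g a' \<subseteq> join {?g a, V}"
      using Join0_upper[of "?g a" "{?g a, V}"] Join0_upper[of V "{?g a, V}"]
        Join0_upper[of "?g a'" "{?g a' | a'. a' \<in> A \<and> a' \<noteq> a}"]
      unfolding V_def by (cases "a' = a") auto
    then show "principal {mapsto A t a'} \<subseteq> join {?g a, V}"
      using principal_subset_meet_gens unfolding gen_eq_meet_gens by blast
  qed
  then have covering: "join {?g a, V} = top0 M z0 z1"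
    using O0_subset_Fin[OF JO] unfolding top0_def by blast
  show ?thesis
    unfolding complemented_def using gen_in_O0 V disjoint covering by blast
qed

end

locale trace_frame = monad_frame M z0 z1
  for M :: "('u, 't) smonad" and z0 z1 :: 'u +
  fixes \<kappa> :: "'k rel" and s :: 'u
  assumes singleton_le_rank: "(card_of {s}, \<kappa>) \<in> ordLeq"
begin

abbreviation "T1 \<equiv> Tm M {s}"
abbreviation "trace_eq1 \<equiv> sim1 M \<kappa> s z0 z1"
abbreviation "trace_eq \<equiv> sim M \<kappa> s z0 z1"
abbreviation "trace_chain \<equiv> chain_meet M \<kappa> s z0 z1"

definition trace_eq1_gens :: "'t \<Rightarrow> 't \<Rightarrow> 't set set set" where
  "trace_eq1_gens m m' = {generator (mapsto A t a) | A t u u' a.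
     (card_of A, \<kappa>) \<in> ordLeq \<and> t \<in> Tm M A \<and> u \<in> A \<rightarrow> T1 \<and> u' \<in> A \<rightarrow> T1 \<and>
     a \<in> A \<and> u a = u' a \<and> m = bnd M A {s} t u \<and> m' = bnd M A {s} t u'}"

lemma trace_eq1_eq_Join0: "trace_eq1 m m' = join (trace_eq1_gens m m')"
  unfolding sim1_def trace_eq1_gens_def ..

lemma trace_eq1_gensE:
  assumes "g \<in> trace_eq1_gens m m'"
  obtains A t a where "g = generator (mapsto A t a)" and "t \<in> Tm M A" and "a \<in> A"
  using assms unfolding trace_eq1_gens_def by blast

lemma trace_eq1_gens_swap: "trace_eq1_gens m m' \<subseteq> trace_eq1_gens m' m"
proof
  fix g assume "g \<in> trace_eq1_gens m m'"
  then obtain A t u u' a where "g = generator (mapsto A t a)" "(card_of A, \<kappa>) \<in> ordLeq"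
    "t \<in> Tm M A" "u \<in> A \<rightarrow> T1" "u' \<in> A \<rightarrow> T1" "a \<in> A" "u a = u' a"
    "m = bnd M A {s} t u" "m' = bnd M A {s} t u'"
    unfolding trace_eq1_gens_def by blast
  then show "g \<in> trace_eq1_gens m' m"
    unfolding trace_eq1_gens_def
    by (intro CollectI exI[of _ A] exI[of _ t] exI[of _ u'] exI[of _ u]) auto
qed

lemma trace_eq1_sym: "trace_eq1 m m' = trace_eq1 m' m"
  unfolding trace_eq1_eq_Join0 using trace_eq1_gens_swap by (metis subset_antisym)

lemma up_closed_trace_eq1_gens: "g \<in> trace_eq1_gens m m' \<Longrightarrow> up_closed g"
  by (elim trace_eq1_gensE) (simp add: up_closed_O0 gen_in_O0)

lemma trace_eq1_in_O0: "trace_eq1 m m' \<in> opens"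
  unfolding trace_eq1_eq_Join0 using up_closed_trace_eq1_gens up_closed_subset_Fin
  by (intro Join0_in_O0) blast

lemma trace_chain_in_O0: "trace_chain m ms n \<in> opens"
  by (induction ms arbitrary: m) (auto intro: Int_in_O0 trace_eq1_in_O0)

lemma trace_chain_append:
  "trace_chain m (ms @ x # ms') n = trace_chain m ms x \<inter> trace_chain x ms' n"
  by (induction ms arbitrary: m) auto

lemma trace_chain_rev: "trace_chain m ms n = trace_chain n (rev ms) m"
proof (induction ms arbitrary: m)
  case Nil
  then show ?case using trace_eq1_sym by simp
next
  case (Cons x ms)
  have "trace_chain n (rev (x # ms)) m = trace_chain n (rev ms) x \<inter> trace_eq1 x m"
    using trace_chain_append[of n "rev ms" x "[]" m] by simp
  then show ?case using Cons trace_eq1_sym by auto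
qed

definition trace_eq_chains :: "'t \<Rightarrow> 't \<Rightarrow> 't set set set" where
  "trace_eq_chains m n = {trace_chain m ms n | ms. set ms \<subseteq> T1}"

lemma trace_eq_eq_Join0: "trace_eq m n = join (trace_eq_chains m n)"
  unfolding sim_def trace_eq_chains_def ..

lemma up_closed_trace_eq_chains: "c \<in> trace_eq_chains m n \<Longrightarrow> up_closed c"
  unfolding trace_eq_chains_def using up_closed_O0[OF trace_chain_in_O0] by blast

lemma trace_eq_in_O0: "trace_eq m n \<in> opens"
  unfolding trace_eq_eq_Join0 using up_closed_trace_eq_chains up_closed_subset_Fin
  by (intro Join0_in_O0) blast

lemma trace_eq_chains_swap: "trace_eq_chains m n \<subseteq> trace_eq_chains n m"
  unfolding trace_eq_chains_def using trace_chain_rev by fastforce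

lemma trace_eq_sym: "trace_eq m n = trace_eq n m"
  unfolding trace_eq_eq_Join0 using trace_eq_chains_swap by (metis subset_antisym)

lemma trace_eq1_subset_trace_eq: "trace_eq1 m n \<subseteq> trace_eq m n"
  unfolding trace_eq_eq_Join0 trace_eq_chains_def
  by (rule Join0_upper) (auto intro: exI[of _ "[]"])

lemma trace_eq_trans:
  assumes "n \<in> T1"
  shows "trace_eq m n \<inter> trace_eq n k \<subseteq> trace_eq m k"
  unfolding trace_eq_eq_Join0[of m n] trace_eq_eq_Join0[of n k]
proof (rule Join0_Int_Join0_subset[OF up_closed_trace_eq_chains up_closed_trace_eq_chains trace_eq_in_O0])
  fix c c' assume "c \<in> trace_eq_chains m n" and "c' \<in> trace_eq_chains n k"
  then obtain ms ms' where c: "c = trace_chain m ms n" and c': "c' = trace_chain n ms' k"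
    and ms: "set (ms @ n # ms') \<subseteq> T1"
    using assms unfolding trace_eq_chains_def by auto
  have "c \<inter> c' = trace_chain m (ms @ n # ms') k"
    unfolding c c' trace_chain_append ..
  also have "\<dots> \<subseteq> trace_eq m k"
    unfolding trace_eq_eq_Join0 trace_eq_chains_def using ms by (intro Join0_upper) blast
  finally show "c \<inter> c' \<subseteq> trace_eq m k" .
qed

lemma trace_eq_refl:
  assumes n: "n \<in> T1"
  shows "trace_eq n n = fins"
proof
  show "trace_eq n n \<subseteq> fins"
    using O0_subset_Fin[OF trace_eq_in_O0] .
  have "generator (mapsto {s} n s) \<in> trace_eq1_gens n n"
    unfolding trace_eq1_gens_def using singleton_le_rank n bnd_ret_right[OF n] ret_in_Tm
    by (intro CollectI exI[of _ "{s}"] exI[of _ n] exI[of _ "ret M {s}"] exI[of _ s]) auto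
  then have "generator (mapsto {s} n s) \<subseteq> trace_eq1 n n"
    unfolding trace_eq1_eq_Join0 by (rule Join0_upper)
  then show "fins \<subseteq> trace_eq n n"
    using gen_mapsto_singleton[OF n] trace_eq1_subset_trace_eq by blast
qed

abbreviation "opens1 \<equiv> O1 M \<kappa> s z0 z1"

lemma O1_apply_in_O0: "w \<in> opens1 \<Longrightarrow> m \<in> T1 \<Longrightarrow> w m \<in> opens"
  unfolding O1_def by (blast dest: PiE_mem)

lemma O1_compat:
  assumes "w \<in> opens1" and "complemented M z0 z1 b" and "m1 \<in> T1" and "m2 \<in> T1"
    and "b \<subseteq> trace_eq m1 m2"
  shows "b \<inter> w m1 = b \<inter> w m2"
  using assms unfolding O1_def by simp

lemma O1I:
  assumes "w \<in> T1 \<rightarrow>\<^sub>E opens"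
    and "\<And>b m1 m2. complemented M z0 z1 b \<Longrightarrow> m1 \<in> T1 \<Longrightarrow> m2 \<in> T1 \<Longrightarrow>
      b \<subseteq> trace_eq m1 m2 \<Longrightarrow> b \<inter> w m1 = b \<inter> w m2"
  shows "w \<in> opens1"
  using assms unfolding O1_def by simp

lemma O1_Int_trace_eq1_subset:
  assumes w: "w \<in> opens1" and m: "m \<in> T1" and m': "m' \<in> T1"
  shows "w m \<inter> trace_eq1 m m' \<subseteq> w m'"
  unfolding trace_eq1_eq_Join0
proof (rule Int_Join0_subset[OF up_closed_O0[OF O1_apply_in_O0[OF w m]] up_closed_trace_eq1_gens
      O1_apply_in_O0[OF w m']])
  fix g assume g: "g \<in> trace_eq1_gens m m'"
  then obtain A t a where "g = generator (mapsto A t a)" and "t \<in> Tm M A" and "a \<in> A"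
    by (rule trace_eq1_gensE)
  then have "complemented M z0 z1 g" by (simp add: complemented_gen_mapsto)
  moreover have "g \<subseteq> trace_eq m m'"
    using Join0_upper[OF g] trace_eq1_subset_trace_eq unfolding trace_eq1_eq_Join0 by blast
  ultimately have "g \<inter> w m = g \<inter> w m'" by (rule O1_compat[OF w _ m m'])
  then show "w m \<inter> g \<subseteq> w m'" by blast
qed

lemma O1_Int_trace_chain_subset:
  assumes w: "w \<in> opens1"
  shows "m \<in> T1 \<Longrightarrow> n \<in> T1 \<Longrightarrow> set ms \<subseteq> T1 \<Longrightarrow> w m \<inter> trace_chain m ms n \<subseteq> w n"
proof (induction ms arbitrary: m)
  case Nil
  then show ?case using O1_Int_trace_eq1_subset[OF w] by simp
next
  case (Cons x ms)
  then have "w m \<inter> trace_eq1 m x \<subseteq> w x" and "w x \<inter> trace_chain x ms n \<subseteq> w n"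
    using O1_Int_trace_eq1_subset[OF w] by simp_all
  then show ?case by auto
qed

lemma O1_Int_trace_eq_subset:
  assumes w: "w \<in> opens1" and m: "m \<in> T1" and n: "n \<in> T1"
  shows "w m \<inter> trace_eq m n \<subseteq> w n"
  unfolding trace_eq_eq_Join0
proof (rule Int_Join0_subset[OF up_closed_O0[OF O1_apply_in_O0[OF w m]] up_closed_trace_eq_chains
      O1_apply_in_O0[OF w n]])
  fix c assume "c \<in> trace_eq_chains m n"
  then obtain ms where "c = trace_chain m ms n" and "set ms \<subseteq> T1"
    unfolding trace_eq_chains_def by blast
  then show "w m \<inter> c \<subseteq> w n" using O1_Int_trace_chain_subset[OF w m n] by blast
qed

abbreviation "hat_const m U \<equiv> meet1 M s (hat M \<kappa> s z0 z1 m) (const1 M s U)"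

lemma hat_const_apply: "n \<in> T1 \<Longrightarrow> hat_const m U n = trace_eq m n \<inter> U"
  unfolding meet1_def hat_def const1_def by simp

lemma hat_const_Int: "hat_const m (U \<inter> V) = meet1 M s (hat_const m U) (hat_const m V)"
  unfolding meet1_def hat_def const1_def by (auto simp: fun_eq_iff)

lemma basic1_eq_hat_const: "basic1 M \<kappa> s z0 z1 m b = hat_const m (generator b)"
  unfolding basic1_def meet1_def hat_def const1_def by (simp add: fun_eq_iff)

lemma hat_const_in_O1:
  assumes m: "m \<in> T1" and U: "U \<in> opens"
  shows "hat_const m U \<in> opens1"
proof (rule O1I)
  show "hat_const m U \<in> T1 \<rightarrow>\<^sub>E opens"
    unfolding meet1_def hat_def const1_def
    using Int_in_O0[OF trace_eq_in_O0 U] by (simp add: restrict_PiE_iff)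
next
  fix b m1 m2 assume "complemented M z0 z1 b" and m1: "m1 \<in> T1" and m2: "m2 \<in> T1"
    and b: "b \<subseteq> trace_eq m1 m2"
  have "b \<inter> trace_eq m m1 \<subseteq> trace_eq m m2"
    using b trace_eq_trans[OF m1, of m m2] by blast
  moreover have "b \<inter> trace_eq m m2 \<subseteq> trace_eq m m1"
    using b trace_eq_sym[of m1 m2] trace_eq_trans[OF m2, of m m1] by blast
  ultimately show "b \<inter> hat_const m U m1 = b \<inter> hat_const m U m2"
    unfolding hat_const_apply[OF m1] hat_const_apply[OF m2] by blast
qed

lemma is_lub1_hat_const:
  assumes w: "w \<in> opens1"
  shows "is_lub1 M \<kappa> s z0 z1 {hat_const m (w m) | m. m \<in> T1} w"
  unfolding is_lub1_def le1_def
proof (intro conjI ballI allI impI)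
  show "w \<in> opens1" by (rule w)
next
  fix v n assume "v \<in> {hat_const m (w m) | m. m \<in> T1}" and n: "n \<in> T1"
  then obtain m where v: "v = hat_const m (w m)" and m: "m \<in> T1" by blast
  have "hat_const m (w m) n \<subseteq> w n"
    unfolding hat_const_apply[OF n] using O1_Int_trace_eq_subset[OF w m n] by blast
  then show "v n \<subseteq> w n" unfolding v .
next
  fix w' n assume ub: "\<forall>v \<in> {hat_const m (w m) | m. m \<in> T1}. \<forall>n \<in> T1. v n \<subseteq> w' n"
    and n: "n \<in> T1"
  have "hat_const n (w n) \<in> {hat_const m (w m) | m. m \<in> T1}" using n by blast
  then have "hat_const n (w n) n \<subseteq> w' n" using bspec[OF bspec[OF ub] n] by blast
  moreover have "hat_const n (w n) n = w n"
    unfolding hat_const_apply[OF n] trace_eq_refl[OF n]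
    using O0_subset_Fin[OF O1_apply_in_O0[OF w n]] by blast
  ultimately show "w n \<subseteq> w' n" by simp
qed

lemma is_lub1_hat_const_Join0:
  assumes m: "m \<in> T1" and Us: "Us \<subseteq> opens"
  shows "is_lub1 M \<kappa> s z0 z1 {hat_const m U | U. U \<in> Us} (hat_const m (join Us))"
  unfolding is_lub1_def le1_def
proof (intro conjI ballI allI impI)
  have "join Us \<in> opens"
    using Us O0_subset_Fin by (intro Join0_in_O0) blast
  then show "hat_const m (join Us) \<in> opens1" by (rule hat_const_in_O1[OF m])
next
  fix v n assume "v \<in> {hat_const m U | U. U \<in> Us}" and n: "n \<in> T1"
  then obtain U where v: "v = hat_const m U" and "U \<in> Us" by blast
  then have "trace_eq m n \<inter> U \<subseteq> trace_eq m n \<inter> join Us" using Join0_upper by blast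
  then show "v n \<subseteq> hat_const m (join Us) n" unfolding v hat_const_apply[OF n] .
next
  fix w' n assume w': "w' \<in> opens1" and ub: "\<forall>v \<in> {hat_const m U | U. U \<in> Us}. \<forall>n \<in> T1. v n \<subseteq> w' n"
    and n: "n \<in> T1"
  show "hat_const m (join Us) n \<subseteq> w' n"
    unfolding hat_const_apply[OF n]
  proof (rule Int_Join0_subset[OF up_closed_O0[OF trace_eq_in_O0] _ O1_apply_in_O0[OF w' n]])
    fix U assume U: "U \<in> Us"
    show "up_closed U" using U Us by (blast intro: up_closed_O0)
    have "hat_const m U \<in> {hat_const m U | U. U \<in> Us}" using U by blast
    then have "hat_const m U n \<subseteq> w' n" using bspec[OF bspec[OF ub] n] by blast
    then show "trace_eq m n \<inter> U \<subseteq> w' n" unfolding hat_const_apply[OF n] .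
  qed
qed

lemma top1_in_O1: "top1 M s z0 z1 \<in> opens1"
  unfolding top1_def top0_def using Fin_in_O0 by (intro O1I) auto

lemma meet1_in_O1:
  assumes v: "v \<in> opens1" and w: "w \<in> opens1"
  shows "meet1 M s v w \<in> opens1"
proof (rule O1I)
  show "meet1 M s v w \<in> T1 \<rightarrow>\<^sub>E opens"
    unfolding meet1_def using Int_in_O0 O1_apply_in_O0[OF v] O1_apply_in_O0[OF w]
    by (simp add: restrict_PiE_iff)
  show "b \<inter> meet1 M s v w m1 = b \<inter> meet1 M s v w m2"
    if "complemented M z0 z1 b" and "m1 \<in> T1" and "m2 \<in> T1" and "b \<subseteq> trace_eq m1 m2" for b m1 m2
    using O1_compat[OF v that] O1_compat[OF w that] that(2,3) unfolding meet1_def by auto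
qed

definition subframe1 :: "('t \<Rightarrow> 't set set) set \<Rightarrow> bool" where
  "subframe1 S \<longleftrightarrow> S \<subseteq> opens1 \<and> top1 M s z0 z1 \<in> S \<and> (\<forall>v \<in> S. \<forall>w \<in> S. meet1 M s v w \<in> S) \<and>
     (\<forall>W w. W \<subseteq> S \<longrightarrow> is_lub1 M \<kappa> s z0 z1 W w \<longrightarrow> w \<in> S)"

lemma generated1_eq: "generated1 M \<kappa> s z0 z1 G = \<Inter>{S. subframe1 S \<and> G \<subseteq> S}"
  unfolding generated1_def subframe1_def by (intro arg_cong[where f = Inter] Collect_cong) blast

lemma subframe1_O1: "subframe1 opens1"
  unfolding subframe1_def is_lub1_def using top1_in_O1 meet1_in_O1 by blast

lemma hat_const_meet_gens_in_subframe1: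
  assumes S: "subframe1 S" and basic: "\<And>b. b \<in> T2 \<Longrightarrow> basic1 M \<kappa> s z0 z1 m b \<in> S"
    and m: "m \<in> T1"
  shows "finite B \<Longrightarrow> B \<subseteq> T2 \<Longrightarrow> hat_const m (meet_gens B) \<in> S"
proof (induction B rule: finite_induct)
  case empty
  have "hat_const m (meet_gens {}) = basic1 M \<kappa> s z0 z1 m (mapsto {s} m s)"
    unfolding basic1_eq_hat_const meet_gens_empty gen_mapsto_singleton[OF m] ..
  then show ?case using basic[OF mapsto_in_T2[OF m]] by simp
next
  case (insert b B)
  then have "basic1 M \<kappa> s z0 z1 m b \<in> S" and "hat_const m (meet_gens B) \<in> S"
    using basic by simp_all
  then show ?case
    using S unfolding subframe1_def meet_gens_insert hat_const_Int basic1_eq_hat_const by blast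
qed

lemma hat_const_in_subframe1:
  assumes S: "subframe1 S" and basic: "\<And>b. b \<in> T2 \<Longrightarrow> basic1 M \<kappa> s z0 z1 m b \<in> S"
    and m: "m \<in> T1" and U: "U \<in> opens"
  shows "hat_const m U \<in> S"
proof -
  let ?Us = "{meet_gens B | B. B \<in> U}"
  have "is_lub1 M \<kappa> s z0 z1 {hat_const m V | V. V \<in> ?Us} (hat_const m (join ?Us))"
    using meet_gens_in_O0 by (intro is_lub1_hat_const_Join0[OF m]) blast
  then have "is_lub1 M \<kappa> s z0 z1 {hat_const m V | V. V \<in> ?Us} (hat_const m U)"
    unfolding O0_eq_Join0_meet_gens[OF U, symmetric] .
  moreover have "hat_const m (meet_gens B) \<in> S" if "B \<in> U" for B
    using that O0_subset_Fin[OF U] unfolding Fin_def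
    by (intro hat_const_meet_gens_in_subframe1[OF S basic m]) auto
  then have "{hat_const m V | V. V \<in> ?Us} \<subseteq> S" by blast
  ultimately show ?thesis using S unfolding subframe1_def by blast
qed

lemma generated1_basic1_eq_O1:
  "generated1 M \<kappa> s z0 z1 {basic1 M \<kappa> s z0 z1 m b | m b. m \<in> T1 \<and> b \<in> T2} = opens1"
  (is "generated1 M \<kappa> s z0 z1 ?G = _")
proof
  have "?G \<subseteq> opens1"
    unfolding basic1_eq_hat_const using hat_const_in_O1 gen_in_O0 by blast
  then show "generated1 M \<kappa> s z0 z1 ?G \<subseteq> opens1"
    unfolding generated1_eq using subframe1_O1 by blast
  show "opens1 \<subseteq> generated1 M \<kappa> s z0 z1 ?G"
  proof
    fix w assume w: "w \<in> opens1"
    have "w \<in> S" if S: "subframe1 S" and G: "?G \<subseteq> S" for S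
    proof -
      have "{hat_const m (w m) | m. m \<in> T1} \<subseteq> S"
        using hat_const_in_subframe1[OF S _ _ O1_apply_in_O0[OF w]] G by blast
      then show ?thesis using S is_lub1_hat_const[OF w] unfolding subframe1_def by blast
    qed
    then show "w \<in> generated1 M \<kappa> s z0 z1 ?G" unfolding generated1_eq by blast
  qed
qed

end

lemma ranked_singleton_le_rank:
  fixes M :: "('u, 't) smonad" and \<kappa> :: "'k rel" and s :: 'u
  assumes "is_monad M" and "ranked M \<kappa>"
  shows "(card_of {s}, \<kappa>) \<in> ordLeq"
proof -
  have \<kappa>: "Card_order \<kappa>" using assms(2) unfolding ranked_def by blast
  have "ret M {s} s \<in> Tm M {s}" using assms(1) unfolding is_monad_def by simp
  then obtain I :: "'u set" where I: "(card_of I, \<kappa>) \<in> ordLess"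
    using assms(2) unfolding ranked_def by blast
  have "Field \<kappa> \<noteq> {}"
  proof
    assume "Field \<kappa> = {}"
    then have "(card_of (Field \<kappa>), card_of I) \<in> ordLeq" by (simp add: card_of_empty)
    moreover have "(\<kappa>, card_of (Field \<kappa>)) \<in> ordIso"
      using card_of_Field_ordIso[OF \<kappa>] by (rule ordIso_symmetric)
    ultimately show False using I not_ordLess_ordLeq ordIso_ordLeq_trans by blast
  qed
  then show ?thesis by (rule Card_order_singl_ordLeq[OF \<kappa>])
qed

theorem lemma3p12:
  fixes M :: "('u, 't) smonad" and \<kappa> :: "'k rel" and s z0 z1 :: 'u
  assumes "is_monad M" and "ranked M \<kappa>" and "z0 \<noteq> z1"
  shows "(\<forall>w \<in> O1 M \<kappa> s z0 z1.
            (\<forall>m \<in> Tm M {s}. meet1 M s (hat M \<kappa> s z0 z1 m) (const1 M s (w m)) \<in> O1 M \<kappa> s z0 z1) \<and>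
            is_lub1 M \<kappa> s z0 z1
              {meet1 M s (hat M \<kappa> s z0 z1 m) (const1 M s (w m)) | m. m \<in> Tm M {s}} w)
       \<and> generated1 M \<kappa> s z0 z1 {basic1 M \<kappa> s z0 z1 m b | m b. m \<in> Tm M {s} \<and> b \<in> Tm M {z0, z1}}
           = O1 M \<kappa> s z0 z1"
proof -
  interpret trace_frame M z0 z1 \<kappa> s
    using assms(1) ranked_singleton_le_rank[OF assms(1,2)] by unfold_locales
  have "meet1 M s (hat M \<kappa> s z0 z1 m) (const1 M s (w m)) \<in> O1 M \<kappa> s z0 z1"
    if "w \<in> O1 M \<kappa> s z0 z1" and "m \<in> Tm M {s}" for w m
    using hat_const_in_O1 O1_apply_in_O0 that by blast
  then show ?thesis using is_lub1_hat_const generated1_basic1_eq_O1 by blast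
qed

end
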